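(* Let $(\Omega,\Sigma,\Pr)$ be a probability space and let $A_i\in\Sigma$ for $i\in\mathbb{N}$. For $k\in\mathbb{N}$ let $$S_k:=\sum_{1\le i_1<\cdots<i_k}\Pr(A_{i_1}\cap\cdots\cap A_{i_k})\in[0,\infty].$$ Fix $k\in\mathbb{N}$. Then the identity $$\Pr\Big(\bigcup_{1\le i_1<\cdots<i_k}(A_{i_1}\cap\cdots\cap A_{i_k})\Big)=\sum_{j\in\mathbb{Z}_+}(-1)^j\binom{j+k-1}{k-1}S_{j+k}$$ holds (with all $S_l$ finite and the series convergent) if and only if $S_l\in[0,\infty)$ for all $l\in\mathbb{N}$ and $\lim_{l\to\infty}l^{k-1}S_l=0$.
   Context: $\mathbb{N}$ denotes the positive integers and $\mathbb{Z}_+$ the nonnegative integers. The union on the left is over all strictly increasing $k$-tuples of positive integers. *)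

theory Defs
  imports "HOL-Probability.Probability"
begin

definition ksubsets :: "nat \<Rightarrow> nat set set" where
  "ksubsets k = {I. I \<subseteq> {1..} \<and> finite I \<and> card I = k}"

definition Ssum :: "'a measure \<Rightarrow> (nat \<Rightarrow> 'a set) \<Rightarrow> nat \<Rightarrow> ennreal" where
  "Ssum M A k = (\<Sum>\<^sub>\<infinity> I \<in> ksubsets k. ennreal (measure M (\<Inter>i\<in>I. A i)))"

end

theory Submission
  imports Defs
begin

text \<open>For w in the sample space let N be the number of indices i \<le> n with w \<in> A i, so that
  the sum of the indicators of A_{i_1} \<inter> ... \<inter> A_{i_l} over i_1 < ... < i_l \<le> n is (N choose l).
  The truncated alternating sums \<open>\<Sum>j\<le>m. (-1)^j (j+k-1 choose k-1) (N choose j+k)\<close> lie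
  alternately above and below the indicator of N \<ge> k, so each differs from it by at most its last
  term. Integrating and letting n \<rightarrow> \<infinity> gives the Bonferroni-type bound
  \<open>\<bar>\<Sum>j\<le>m. (-1)^j (j+k-1 choose k-1) S_{j+k} - Pr(\<Union>\<dots>)\<bar> \<le> (m+k-1 choose k-1) S_{m+k}\<close>.
  Since (m+k-1 choose k-1) is of exact order m^(k-1), the series converges to Pr(\<Union>\<dots>) as soon as
  l^(k-1) S_l \<rightarrow> 0; conversely, convergence of the series forces its terms, and hence
  l^(k-1) S_l, to tend to 0.\<close>

lemma sum_alternating_choose_Suc:
  "(\<Sum>j\<le>m. (-1)^j * of_nat (Suc p choose j)) = (-1)^m * (of_nat (p choose m) :: 'a::comm_ring_1)"
proof (induction m)
  case (Suc m)
  then show ?case by (simp add: binomial_Suc_Suc algebra_simps)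
qed simp

lemma sum_alternating_choose_shifted:
  "(\<Sum>j\<le>m. (-1)^j * real (j + r choose r) * real (n choose (j + r)))
     = (if n = r then 1 else (-1)^m * real (n choose r) * real ((n - r - 1) choose m))"
proof -
  consider "n < r" | "n = r" | "r < n" by linarith
  then show ?thesis
  proof cases
    case 1
    then show ?thesis by (simp add: binomial_eq_0)
  next
    case 2
    then show ?thesis by (simp add: sum.atMost_shift binomial_eq_0)
  next
    case 3
    have "real (j + r choose r) * real (n choose (j + r)) = real (n choose r) * real (Suc (n - r - 1) choose j)" for j
    proof (cases "j + r \<le> n")
      case True
      then have "(n choose (j + r)) * (j + r choose r) = (n choose r) * ((n - r) choose j)"
        using choose_mult[of r "j + r" n] by simp
      then show ?thesis using 3 by (metis Suc_diff_Suc diff_Suc_1 mult.commute of_nat_mult)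
    next
      case False
      then show ?thesis using 3 by (simp add: Suc_diff_Suc binomial_eq_0)
    qed
    then have "(\<Sum>j\<le>m. (-1)^j * real (j + r choose r) * real (n choose (j + r)))
        = real (n choose r) * (\<Sum>j\<le>m. (-1)^j * real (Suc (n - r - 1) choose j))"
      by (simp add: sum_distrib_left mult.assoc mult.left_commute)
    then show ?thesis using 3 by (simp add: sum_alternating_choose_Suc)
  qed
qed

lemma alternating_remainder_le_last_term:
  fixes t :: "nat \<Rightarrow> real"
  assumes alternates: "\<And>m. 0 \<le> (-1)^m * ((\<Sum>j\<le>m. t j) - L)" and "0 \<le> L"
  shows "\<bar>(\<Sum>j\<le>m. t j) - L\<bar> \<le> \<bar>t m\<bar>"
proof (cases m)
  case 0
  then show ?thesis using alternates[of 0] \<open>0 \<le> L\<close> by simp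
next
  case (Suc m')
  have "0 \<le> (-1)^m' * ((\<Sum>j\<le>m'. t j) - L)" "0 \<le> - ((-1)^m' * ((\<Sum>j\<le>m'. t j) + t m - L))"
    using alternates[of m'] alternates[of m] Suc by simp_all
  then show ?thesis using Suc by (cases "even m'") (auto simp: abs_if)
qed

text \<open>The m-th partial sum of the series at a point where exactly n of the events occur,
  i.e. with S_l replaced by (n choose l). Here and below k = Suc r, which keeps truncated
  subtraction out of the binomial weights.\<close>
definition bonferroni_partial :: "nat \<Rightarrow> nat \<Rightarrow> nat \<Rightarrow> real" where
  "bonferroni_partial r m n = (\<Sum>j\<le>m. (-1)^j * real (j + r choose r) * real (n choose (j + Suc r)))"

lemma bonferroni_partial_alternates:
  "0 \<le> (-1)^m * (bonferroni_partial r m n - of_bool (r < n))"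
proof (induction n)
  case 0
  then show ?case by (simp add: bonferroni_partial_def)
next
  case (Suc n)
  have "bonferroni_partial r m (Suc n) = bonferroni_partial r m n
      + (\<Sum>j\<le>m. (-1)^j * real (j + r choose r) * real (n choose (j + r)))"
    by (simp add: bonferroni_partial_def algebra_simps sum.distrib)
  also have "\<dots> = bonferroni_partial r m n
      + (if n = r then 1 else (-1)^m * real (n choose r) * real ((n - r - 1) choose m))"
    by (simp only: sum_alternating_choose_shifted)
  finally have step: "bonferroni_partial r m (Suc n) = \<dots>" .
  show ?case
  proof (cases "n = r")
    case True
    then show ?thesis using Suc.IH step by simp
  next
    case False
    have "(-1)^m * (bonferroni_partial r m (Suc n) - of_bool (r < Suc n))
        = (-1)^m * (bonferroni_partial r m n - of_bool (r < n))
          + real (n choose r) * real ((n - r - 1) choose m)"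
      using False by (simp add: step algebra_simps flip: power_add)
    with Suc.IH show ?thesis by simp
  qed
qed

lemma bonferroni_partial_error_le:
  "\<bar>bonferroni_partial r m n - of_bool (r < n)\<bar> \<le> real (m + r choose r) * real (n choose (m + Suc r))"
  using alternating_remainder_le_last_term[OF bonferroni_partial_alternates[unfolded bonferroni_partial_def], of r n m]
  by (simp add: bonferroni_partial_def abs_mult)

lemma binomial_le_Suc_pow: "real (j + r choose r) \<le> real (j + Suc r) ^ r"
proof -
  have "j + r choose r \<le> (j + r) ^ r" by (rule binomial_le_pow) simp
  also have "\<dots> \<le> (j + Suc r) ^ r" by (intro power_mono) auto
  finally show ?thesis by (metis of_nat_le_iff of_nat_power)
qed

lemma Suc_pow_le_binomial: "real (j + Suc r) ^ r \<le> (2 * real r) ^ r * real (j + r choose r)"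
proof (cases "r = 0")
  case False
  then have "2 * real r * (real (j + r) / real r) = 2 * real (j + r)" by simp
  then have "real (j + Suc r) \<le> 2 * real r * (real (j + r) / real r)" using False by simp
  then have "real (j + Suc r) ^ r \<le> (2 * real r * (real (j + r) / real r)) ^ r"
    by (rule power_mono) simp
  also have "\<dots> = (2 * real r) ^ r * (real (j + r) / real r) ^ r"
    by (rule power_mult_distrib)
  also have "\<dots> \<le> (2 * real r) ^ r * real (j + r choose r)"
    by (intro mult_left_mono binomial_ge_n_over_k_pow_k) auto
  finally show ?thesis .
qed simp

lemma tendsto_binomial_weight_iff:
  fixes s :: "nat \<Rightarrow> real"
  assumes nonneg: "\<And>l. 0 \<le> s l"
  shows "(\<lambda>j. real (j + r choose r) * s (j + Suc r)) \<longlonglongrightarrow> 0 \<longleftrightarrow> (\<lambda>l. real l ^ r * s l) \<longlonglongrightarrow> 0"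
proof -
  have "(\<lambda>l. real l ^ r * s l) \<longlonglongrightarrow> 0 \<longleftrightarrow> (\<lambda>j. real (j + Suc r) ^ r * s (j + Suc r)) \<longlonglongrightarrow> 0"
  proof
    assume "(\<lambda>l. real l ^ r * s l) \<longlonglongrightarrow> 0"
    then show "(\<lambda>j. real (j + Suc r) ^ r * s (j + Suc r)) \<longlonglongrightarrow> 0"
      by (rule LIMSEQ_ignore_initial_segment)
  next
    assume "(\<lambda>j. real (j + Suc r) ^ r * s (j + Suc r)) \<longlonglongrightarrow> 0"
    then show "(\<lambda>l. real l ^ r * s l) \<longlonglongrightarrow> 0"
      by (rule LIMSEQ_offset)
  qed
  also have "\<dots> \<longleftrightarrow> (\<lambda>j. real (j + r choose r) * s (j + Suc r)) \<longlonglongrightarrow> 0"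
  proof
    assume lim: "(\<lambda>j. real (j + Suc r) ^ r * s (j + Suc r)) \<longlonglongrightarrow> 0"
    have "norm (real (j + r choose r) * s (j + Suc r)) \<le> real (j + Suc r) ^ r * s (j + Suc r)" for j
      using mult_right_mono[OF binomial_le_Suc_pow nonneg] nonneg by simp
    then show "(\<lambda>j. real (j + r choose r) * s (j + Suc r)) \<longlonglongrightarrow> 0"
      by (intro Lim_null_comparison[OF always_eventually lim] allI)
  next
    assume "(\<lambda>j. real (j + r choose r) * s (j + Suc r)) \<longlonglongrightarrow> 0"
    then have lim: "(\<lambda>j. (2 * real r) ^ r * (real (j + r choose r) * s (j + Suc r))) \<longlonglongrightarrow> 0"
      by (rule tendsto_mult_right_zero)
    have "norm (real (j + Suc r) ^ r * s (j + Suc r)) \<le> (2 * real r) ^ r * (real (j + r choose r) * s (j + Suc r))" for j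
      using mult_right_mono[OF Suc_pow_le_binomial nonneg] nonneg by (simp add: mult.assoc)
    then show "(\<lambda>j. real (j + Suc r) ^ r * s (j + Suc r)) \<longlonglongrightarrow> 0"
      by (intro Lim_null_comparison[OF always_eventually lim] allI)
  qed
  finally show ?thesis ..
qed

definition ksubsets_upto :: "nat \<Rightarrow> nat \<Rightarrow> nat set set" where
  "ksubsets_upto n l = {I. I \<subseteq> {1..n} \<and> card I = l}"

definition count_occurring :: "(nat \<Rightarrow> 'a set) \<Rightarrow> nat \<Rightarrow> 'a \<Rightarrow> nat" where
  "count_occurring A n w = card {i\<in>{1..n}. w \<in> A i}"

definition at_least_events :: "(nat \<Rightarrow> 'a set) \<Rightarrow> nat \<Rightarrow> nat \<Rightarrow> 'a set" where
  "at_least_events A n k = (\<Union>I\<in>ksubsets_upto n k. \<Inter>i\<in>I. A i)"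

definition Ssum_upto :: "'a measure \<Rightarrow> (nat \<Rightarrow> 'a set) \<Rightarrow> nat \<Rightarrow> nat \<Rightarrow> real" where
  "Ssum_upto M A n l = (\<Sum>I\<in>ksubsets_upto n l. measure M (\<Inter>i\<in>I. A i))"

lemma finite_ksubsets_upto [simp]: "finite (ksubsets_upto n l)"
  by (rule finite_subset[of _ "Pow {1..n}"]) (auto simp: ksubsets_upto_def)

lemma ksubsets_upto_subset_ksubsets: "ksubsets_upto n l \<subseteq> ksubsets l"
  by (auto simp: ksubsets_upto_def ksubsets_def intro: finite_subset)

lemma ksubsets_upto_mono: "n \<le> n' \<Longrightarrow> ksubsets_upto n l \<subseteq> ksubsets_upto n' l"
  by (auto simp: ksubsets_upto_def)

lemma finite_subset_ksubsets_upto: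
  assumes "finite X" "X \<subseteq> ksubsets l"
  obtains N where "X \<subseteq> ksubsets_upto N l"
proof -
  have "finite (\<Union>X)" using assms by (auto simp: ksubsets_def)
  then obtain N where N: "\<forall>i\<in>\<Union>X. i \<le> N" using finite_nat_set_iff_bounded_le by blast
  have "I \<in> ksubsets_upto N l" if "I \<in> X" for I
  proof -
    have "I \<in> ksubsets l" "\<forall>i\<in>I. i \<le> N" using assms(2) N that by auto
    then show ?thesis by (auto simp: ksubsets_def ksubsets_upto_def)
  qed
  then show thesis using that by blast
qed

lemma filterlim_ksubsets_upto:
  "filterlim (\<lambda>n. ksubsets_upto n l) (finite_subsets_at_top (ksubsets l)) sequentially"
  unfolding filterlim_finite_subsets_at_top
proof safe
  fix X assume "finite X" "X \<subseteq> ksubsets l"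
  then obtain N where N: "X \<subseteq> ksubsets_upto N l" by (rule finite_subset_ksubsets_upto)
  show "\<forall>\<^sub>F n in sequentially. finite (ksubsets_upto n l) \<and> X \<subseteq> ksubsets_upto n l
      \<and> ksubsets_upto n l \<subseteq> ksubsets l"
  proof (rule eventually_sequentiallyI)
    fix n assume "N \<le> n"
    then show "finite (ksubsets_upto n l) \<and> X \<subseteq> ksubsets_upto n l \<and> ksubsets_upto n l \<subseteq> ksubsets l"
      using N ksubsets_upto_mono[of N n l] ksubsets_upto_subset_ksubsets[of n l] by simp
  qed
qed

lemma UN_at_least_events: "(\<Union>n. at_least_events A n k) = (\<Union>I\<in>ksubsets k. \<Inter>i\<in>I. A i)"
proof -
  have "ksubsets k \<subseteq> (\<Union>n. ksubsets_upto n k)"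
  proof
    fix I assume "I \<in> ksubsets k"
    then obtain N where "{I} \<subseteq> ksubsets_upto N k"
      using finite_subset_ksubsets_upto[of "{I}" k] by auto
    then show "I \<in> (\<Union>n. ksubsets_upto n k)" by auto
  qed
  then have "(\<Union>n. ksubsets_upto n k) = ksubsets k"
    using ksubsets_upto_subset_ksubsets by (intro equalityI UN_least) auto
  then show ?thesis
    unfolding at_least_events_def UN_UN_flatten[symmetric] by simp
qed

lemma sum_indicator_Inter_ksubsets_upto:
  "(\<Sum>I\<in>ksubsets_upto n l. indicator (\<Inter>i\<in>I. A i) w) = real (count_occurring A n w choose l)"
proof -
  have "(\<Sum>I\<in>ksubsets_upto n l. indicator (\<Inter>i\<in>I. A i) w)
      = real (card {I\<in>ksubsets_upto n l. \<forall>i\<in>I. w \<in> A i})"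
    by (simp add: indicator_def Int_def)
  also have "{I\<in>ksubsets_upto n l. \<forall>i\<in>I. w \<in> A i} = {I. I \<subseteq> {i\<in>{1..n}. w \<in> A i} \<and> card I = l}"
    by (auto simp: ksubsets_upto_def)
  also have "card \<dots> = count_occurring A n w choose l"
    by (simp add: count_occurring_def n_subsets)
  finally show ?thesis .
qed

lemma indicator_at_least_events:
  "indicator (at_least_events A n k) w = (of_bool (k \<le> count_occurring A n w) :: real)"
proof -
  have "w \<in> at_least_events A n k \<longleftrightarrow> (\<exists>I. I \<subseteq> {i\<in>{1..n}. w \<in> A i} \<and> card I = k)"
    by (auto simp: at_least_events_def ksubsets_upto_def subset_iff)
  also have "\<dots> \<longleftrightarrow> k \<le> count_occurring A n w"
    unfolding count_occurring_def
  proof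
    assume "\<exists>I. I \<subseteq> {i\<in>{1..n}. w \<in> A i} \<and> card I = k"
    then show "k \<le> card {i\<in>{1..n}. w \<in> A i}" by (auto intro: card_mono)
  next
    assume "k \<le> card {i\<in>{1..n}. w \<in> A i}"
    then show "\<exists>I. I \<subseteq> {i\<in>{1..n}. w \<in> A i} \<and> card I = k"
      by (meson obtain_subset_with_card_n)
  qed
  finally show ?thesis by (simp add: indicator_def)
qed

lemma tendsto_Ssum_upto:
  assumes "Ssum M A l < \<infinity>"
  shows "(\<lambda>n. Ssum_upto M A n l) \<longlonglongrightarrow> enn2real (Ssum M A l)"
proof -
  let ?f = "\<lambda>I. ennreal (measure M (\<Inter>i\<in>I. A i))"
  have "?f summable_on ksubsets l"
    by (rule nonneg_summable_on_complete) simp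
  then have "(\<lambda>n. sum ?f (ksubsets_upto n l)) \<longlonglongrightarrow> Ssum M A l"
    unfolding Ssum_def by (rule filterlim_compose[OF infsum_tendsto filterlim_ksubsets_upto])
  then have "(\<lambda>n. enn2real (sum ?f (ksubsets_upto n l))) \<longlonglongrightarrow> enn2real (Ssum M A l)"
    using assms by (intro tendsto_enn2real) auto
  then show ?thesis
    by (simp add: Ssum_upto_def sum_ennreal sum_nonneg)
qed

context finite_measure
begin

lemma sets_Inter_ksubsets_upto:
  assumes "A ` {1..} \<subseteq> sets M" "I \<in> ksubsets_upto n l" "0 < l"
  shows "(\<Inter>i\<in>I. A i) \<in> sets M"
proof -
  have "finite I" "I \<noteq> {}" "I \<subseteq> {1..n}"
    using assms(2,3) by (auto simp: ksubsets_upto_def intro: finite_subset)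
  then show ?thesis using assms(1) by (intro sets.finite_INT) auto
qed

lemma sets_at_least_events:
  assumes "A ` {1..} \<subseteq> sets M" "0 < k"
  shows "at_least_events A n k \<in> sets M"
  unfolding at_least_events_def using sets_Inter_ksubsets_upto[OF assms(1) _ assms(2)]
  by (intro sets.finite_UN) auto

lemma integral_count_occurring_choose:
  assumes "A ` {1..} \<subseteq> sets M" "0 < l"
  shows "integrable M (\<lambda>w. real (count_occurring A n w choose l))"
    and "(\<integral>w. real (count_occurring A n w choose l) \<partial>M) = Ssum_upto M A n l"
proof -
  have "integrable M (indicator (\<Inter>i\<in>I. A i) :: 'a \<Rightarrow> real)" if "I \<in> ksubsets_upto n l" for I
    using sets_Inter_ksubsets_upto[OF assms(1) that assms(2)] by (simp add: less_top[symmetric])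
  then show "integrable M (\<lambda>w. real (count_occurring A n w choose l))"
    and "(\<integral>w. real (count_occurring A n w choose l) \<partial>M) = Ssum_upto M A n l"
    using sets_Inter_ksubsets_upto[OF assms(1) _ assms(2)]
    by (simp_all add: Ssum_upto_def flip: sum_indicator_Inter_ksubsets_upto)
qed

lemma bonferroni_inequality_upto:
  assumes A: "A ` {1..} \<subseteq> sets M"
  shows "\<bar>(\<Sum>j\<le>m. (-1)^j * real (j + r choose r) * Ssum_upto M A n (j + Suc r))
            - measure M (at_least_events A n (Suc r))\<bar>
         \<le> real (m + r choose r) * Ssum_upto M A n (m + Suc r)"
proof -
  let ?N = "count_occurring A n"
  have int: "integrable M (\<lambda>w. real (?N w choose (j + Suc r)))" for j
    using integral_count_occurring_choose(1)[OF A] by simp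
  have partial: "(\<integral>w. bonferroni_partial r m (?N w) \<partial>M)
      = (\<Sum>j\<le>m. (-1)^j * real (j + r choose r) * Ssum_upto M A n (j + Suc r))"
    using int by (simp add: bonferroni_partial_def integral_count_occurring_choose(2)[OF A])
  have U: "at_least_events A n (Suc r) \<in> sets M"
    using sets_at_least_events[OF A] by simp
  have indicator: "(\<lambda>w. of_bool (r < ?N w) :: real) = indicator (at_least_events A n (Suc r))"
    by (simp add: fun_eq_iff indicator_at_least_events)
  have at_least: "(\<integral>w. of_bool (r < ?N w) \<partial>M) = measure M (at_least_events A n (Suc r))"
    using U by (simp add: indicator Int_absorb2 sets.sets_into_space)
  have int_partial: "integrable M (\<lambda>w. bonferroni_partial r m (?N w))"
    using int by (simp add: bonferroni_partial_def)
  have int_at_least: "integrable M (\<lambda>w. of_bool (r < ?N w) :: real)"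
    using U by (simp add: indicator less_top[symmetric])
  have "(\<Sum>j\<le>m. (-1)^j * real (j + r choose r) * Ssum_upto M A n (j + Suc r))
         - measure M (at_least_events A n (Suc r))
      = (\<integral>w. bonferroni_partial r m (?N w) - of_bool (r < ?N w) \<partial>M)"
    unfolding partial[symmetric] at_least[symmetric]
    by (rule Bochner_Integration.integral_diff[symmetric, OF int_partial int_at_least])
  also have "\<bar>\<dots>\<bar> \<le> (\<integral>w. \<bar>bonferroni_partial r m (?N w) - of_bool (r < ?N w)\<bar> \<partial>M)"
    using integral_norm_bound[of M "\<lambda>w. bonferroni_partial r m (?N w) - of_bool (r < ?N w)"] by simp
  also have "\<dots> \<le> (\<integral>w. real (m + r choose r) * real (?N w choose (m + Suc r)) \<partial>M)"
    by (intro integral_mono integrable_abs Bochner_Integration.integrable_diff integrable_mult_right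
        int int_partial int_at_least bonferroni_partial_error_le)
  also have "\<dots> = real (m + r choose r) * Ssum_upto M A n (m + Suc r)"
    by (simp add: integral_count_occurring_choose(2)[OF A])
  finally show ?thesis .
qed

lemma tendsto_measure_at_least_events:
  assumes "A ` {1..} \<subseteq> sets M" "0 < k"
  shows "(\<lambda>n. measure M (at_least_events A n k)) \<longlonglongrightarrow> measure M (\<Union>I\<in>ksubsets k. \<Inter>i\<in>I. A i)"
  unfolding UN_at_least_events[symmetric]
proof (rule finite_Lim_measure_incseq)
  show "range (\<lambda>n. at_least_events A n k) \<subseteq> sets M"
    using sets_at_least_events[OF assms] by auto
  show "incseq (\<lambda>n. at_least_events A n k)"
    unfolding incseq_def at_least_events_def using ksubsets_upto_mono by blast
qed

lemma bonferroni_inequality_Ssum: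
  assumes A: "A ` {1..} \<subseteq> sets M" and finite_Ssum: "\<And>l. 0 < l \<Longrightarrow> Ssum M A l < \<infinity>"
  shows "\<bar>(\<Sum>j\<le>m. (-1)^j * real (j + r choose r) * enn2real (Ssum M A (j + Suc r)))
            - measure M (\<Union>I\<in>ksubsets (Suc r). \<Inter>i\<in>I. A i)\<bar>
         \<le> real (m + r choose r) * enn2real (Ssum M A (m + Suc r))"
proof -
  have "\<exists>N. \<forall>n\<ge>N. \<bar>(\<Sum>j\<le>m. (-1)^j * real (j + r choose r) * Ssum_upto M A n (j + Suc r))
            - measure M (at_least_events A n (Suc r))\<bar>
         \<le> real (m + r choose r) * Ssum_upto M A n (m + Suc r)"
    using bonferroni_inequality_upto[OF A] by blast
  then show ?thesis
    by (rule LIMSEQ_le[rotated 2])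
       (intro tendsto_intros tendsto_Ssum_upto finite_Ssum tendsto_measure_at_least_events[OF A]; simp)+
qed

lemma bonferroni_series_sums:
  assumes A: "A ` {1..} \<subseteq> sets M" and finite_Ssum: "\<And>l. 0 < l \<Longrightarrow> Ssum M A l < \<infinity>"
    and weights: "(\<lambda>l. real l ^ r * enn2real (Ssum M A l)) \<longlonglongrightarrow> 0"
  shows "(\<lambda>j. (-1)^j * real (j + r choose r) * enn2real (Ssum M A (j + Suc r)))
           sums measure M (\<Union>I\<in>ksubsets (Suc r). \<Inter>i\<in>I. A i)"
proof -
  have last_term: "(\<lambda>m. real (m + r choose r) * enn2real (Ssum M A (m + Suc r))) \<longlonglongrightarrow> 0"
    using weights tendsto_binomial_weight_iff[of "\<lambda>l. enn2real (Ssum M A l)" r] by simp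
  have remainder: "norm ((\<Sum>j\<le>m. (-1)^j * real (j + r choose r) * enn2real (Ssum M A (j + Suc r)))
      - measure M (\<Union>I\<in>ksubsets (Suc r). \<Inter>i\<in>I. A i))
      \<le> real (m + r choose r) * enn2real (Ssum M A (m + Suc r))" for m
    unfolding real_norm_def by (rule bonferroni_inequality_Ssum[OF A finite_Ssum])
  have "(\<lambda>m. (\<Sum>j\<le>m. (-1)^j * real (j + r choose r) * enn2real (Ssum M A (j + Suc r)))
      - measure M (\<Union>I\<in>ksubsets (Suc r). \<Inter>i\<in>I. A i)) \<longlonglongrightarrow> 0"
    by (rule Lim_null_comparison[OF always_eventually[OF allI[OF remainder]] last_term])
  then show ?thesis
    unfolding sums_def_le by (rule LIM_zero_cancel)
qed

end

theorem theorem1p1: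
  fixes M :: "'a measure" and A :: "nat \<Rightarrow> 'a set" and k :: nat
  assumes "prob_space M"
    and "\<And>i. i \<ge> 1 \<Longrightarrow> A i \<in> sets M"
    and "k \<ge> 1"
  shows "((\<forall>l\<ge>1. Ssum M A l < \<infinity>)
          \<and> summable (\<lambda>j. (-1) ^ j * real ((j + k - 1) choose (k - 1)) * enn2real (Ssum M A (j + k)))
          \<and> measure M (\<Union>I\<in>ksubsets k. \<Inter>i\<in>I. A i)
              = (\<Sum>j. (-1) ^ j * real ((j + k - 1) choose (k - 1)) * enn2real (Ssum M A (j + k))))
     \<longleftrightarrow>
         ((\<forall>l\<ge>1. Ssum M A l < \<infinity>)
          \<and> (\<lambda>l. real l ^ (k - 1) * enn2real (Ssum M A l)) \<longlonglongrightarrow> 0)"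
proof -
  interpret prob_space M by fact
  obtain r where k: "k = Suc r" using \<open>k \<ge> 1\<close> by (cases k) auto
  have A: "A ` {1..} \<subseteq> sets M" using assms(2) by auto
  have shift: "j + k - 1 = j + r" "k - 1 = r" for j using k by auto
  let ?t = "\<lambda>j. (-1) ^ j * real (j + r choose r) * enn2real (Ssum M A (j + k))"
  have "(\<lambda>l. real l ^ r * enn2real (Ssum M A l)) \<longlonglongrightarrow> 0" if "summable ?t"
  proof -
    have "(\<lambda>j. real (j + r choose r) * enn2real (Ssum M A (j + Suc r))) \<longlonglongrightarrow> 0"
      using tendsto_rabs_zero[OF summable_LIMSEQ_zero[OF that]] unfolding k by (simp add: abs_mult)
    then show ?thesis using tendsto_binomial_weight_iff[of "\<lambda>l. enn2real (Ssum M A l)" r] by simp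
  qed
  moreover have "?t sums measure M (\<Union>I\<in>ksubsets k. \<Inter>i\<in>I. A i)"
    if "\<forall>l\<ge>1. Ssum M A l < \<infinity>" "(\<lambda>l. real l ^ r * enn2real (Ssum M A l)) \<longlonglongrightarrow> 0"
  proof -
    have "Ssum M A l < \<infinity>" if "0 < l" for l using that \<open>\<forall>l\<ge>1. Ssum M A l < \<infinity>\<close> by simp
    then show ?thesis unfolding k by (rule bonferroni_series_sums[OF A _ that(2)])
  qed
  ultimately show ?thesis
    unfolding shift by (auto dest: sums_summable sums_unique)
qed

end
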